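(* Let $\alpha\in(0,1/2)$. For every non-degenerate real random variable $X$ with $E|X|<\infty$, $$-1+2\alpha < \tilde{s}_2(\alpha) < 1-2\alpha .$$ Moreover, both bounds are sharp: $\sup_X \tilde{s}_2(\alpha)=1-2\alpha$ and $\inf_X \tilde{s}_2(\alpha)=-1+2\alpha$, where the supremum and infimum range over all non-degenerate random variables $X$ with finite mean.
   Context: For a random variable $X$ with $E|X|<\infty$ and $\tau\in(0,1)$, the $\tau$-expectile $e_X(\tau)$ is the unique real number $t$ satisfying $\tau\, E(X-t)_+ = (1-\tau)\, E(X-t)_-$, where $x_+=\max\{x,0\}$ and $x_-=\max\{-x,0\}$. In particular $e_X(1/2)=\mu:=EX$. For $\alpha\in(0,1/2)$, the expectile skewness is $$\tilde{s}_2(\alpha) = \frac{e_X(1-\alpha)+e_X(\alpha)-2\mu}{e_X(1-\alpha)-e_X(\alpha)}.$$ (For non-degenerate $X$, $e_X(\alpha)<\mu<e_X(1-\alpha)$, so this is well defined.) *)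

theory Defs
  imports "HOL-Probability.Probability"
begin

definition nondeg_rv :: "'a measure \<Rightarrow> ('a \<Rightarrow> real) \<Rightarrow> bool" where
  "nondeg_rv M X \<longleftrightarrow> prob_space M \<and> X \<in> borel_measurable M \<and> integrable M X
     \<and> \<not> (\<exists>c. AE x in M. X x = c)"

definition expectile :: "'a measure \<Rightarrow> ('a \<Rightarrow> real) \<Rightarrow> real \<Rightarrow> real" where
  "expectile M X \<tau> = (THE t. \<tau> * (\<integral>x. max (X x - t) 0 \<partial>M)
                              = (1 - \<tau>) * (\<integral>x. max (t - X x) 0 \<partial>M))"

definition expectile_skewness :: "'a measure \<Rightarrow> ('a \<Rightarrow> real) \<Rightarrow> real \<Rightarrow> real" where
  "expectile_skewness M X \<alpha> =
     (expectile M X (1 - \<alpha>) + expectile M X \<alpha> - 2 * (\<integral>x. X x \<partial>M))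
     / (expectile M X (1 - \<alpha>) - expectile M X \<alpha>)"

end

theory Submission
  imports Defs
begin

text \<open>For the partial moments \<open>F t = E(X - t)\<^sub>+\<close> and \<open>G t = E(t - X)\<^sub>+\<close> one has \<open>F - G = \<mu> - t\<close>, so the
  expectile equations for \<open>a = e(\<alpha>)\<close> and \<open>b = e(1 - \<alpha>)\<close> give
  \<open>(1 - \<alpha>)(\<mu> - a) = (1 - 2\<alpha>) F a\<close> and \<open>\<alpha>(b - \<mu>) = (1 - 2\<alpha>) F b\<close>. Hence
  \<open>s\<^sub>2(\<alpha>) = (1 - 2\<alpha>)(1 - 2 (F a - F b)/(b - a))\<close>. For non-degenerate \<open>X\<close> we have
  \<open>a < \<mu> < b\<close>, and then \<open>0 < F a - F b < b - a\<close> strictly, which is the two-sided bound.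
  For a Bernoulli(\<open>p\<close>) variable the expectiles lie in \<open>[0,1]\<close>, where \<open>F\<close> is affine
  with slope \<open>-p\<close>, so
  \<open>s\<^sub>2(\<alpha>) = (1 - 2\<alpha>)(1 - 2p)\<close>, which sweeps out the whole open interval.\<close>

locale finite_mean_rv = prob_space M for M :: "'a measure" +
  fixes X :: "'a \<Rightarrow> real"
  assumes integrable_X: "integrable M X"
begin

definition upper_pm :: "real \<Rightarrow> real" where
  "upper_pm t = (\<integral>x. max (X x - t) 0 \<partial>M)"

definition lower_pm :: "real \<Rightarrow> real" where
  "lower_pm t = (\<integral>x. max (t - X x) 0 \<partial>M)"

definition expectile_ident :: "real \<Rightarrow> real \<Rightarrow> real" where
  "expectile_ident \<tau> t = \<tau> * upper_pm t - (1 - \<tau>) * lower_pm t"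

lemma integrable_upper_pm_integrand: "integrable M (\<lambda>x. max (X x - t) 0)"
  using integrable_X by (intro integrable_max) auto

lemma integrable_lower_pm_integrand: "integrable M (\<lambda>x. max (t - X x) 0)"
  using integrable_X by (intro integrable_max) auto

lemma upper_pm_minus_lower_pm: "upper_pm t - lower_pm t = expectation X - t"
proof -
  have "upper_pm t - lower_pm t = (\<integral>x. max (X x - t) 0 - max (t - X x) 0 \<partial>M)"
    unfolding upper_pm_def lower_pm_def
    using integrable_upper_pm_integrand integrable_lower_pm_integrand by simp
  also have "\<dots> = (\<integral>x. X x - t \<partial>M)"
    by (rule Bochner_Integration.integral_cong) auto
  also have "\<dots> = expectation X - t"
    using integrable_X by (simp add: prob_space)
  finally show ?thesis .
qed

lemma upper_pm_nonneg: "0 \<le> upper_pm t"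
  unfolding upper_pm_def by (rule integral_nonneg_AE) simp

lemma lower_pm_nonneg: "0 \<le> lower_pm t"
  unfolding lower_pm_def by (rule integral_nonneg_AE) simp

lemma upper_pm_antimono: "s \<le> t \<Longrightarrow> upper_pm t \<le> upper_pm s"
  unfolding upper_pm_def
  by (rule integral_mono[OF integrable_upper_pm_integrand integrable_upper_pm_integrand]) auto

lemma lower_pm_mono: "s \<le> t \<Longrightarrow> lower_pm s \<le> lower_pm t"
  unfolding lower_pm_def
  by (rule integral_mono[OF integrable_lower_pm_integrand integrable_lower_pm_integrand]) auto

lemma upper_pm_strict_antimono:
  assumes "s < t" and "s < expectation X"
  shows "upper_pm t < upper_pm s"
proof (rule ccontr)
  assume "\<not> upper_pm t < upper_pm s"
  then have "(\<integral>x. max (X x - s) 0 - max (X x - t) 0 \<partial>M) = 0"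
    using upper_pm_antimono[of s t] assms(1) integrable_upper_pm_integrand
    unfolding upper_pm_def by simp
  then have "AE x in M. max (X x - s) 0 - max (X x - t) 0 = 0"
    using integral_nonneg_eq_0_iff_AE[of M "\<lambda>x. max (X x - s) 0 - max (X x - t) 0"]
      integrable_upper_pm_integrand assms(1) by auto
  then have "AE x in M. X x \<le> s"
    by (rule eventually_mono) (use assms(1) in \<open>auto simp: max_def split: if_splits\<close>)
  then have "expectation X \<le> expectation (\<lambda>_. s)"
    using integrable_X by (intro integral_mono_AE) auto
  then show False
    using assms(2) by (simp add: prob_space)
qed

lemma lower_pm_strict_mono:
  assumes "s < t" and "expectation X < t"
  shows "lower_pm s < lower_pm t"
proof (rule ccontr)
  assume "\<not> lower_pm s < lower_pm t"
  then have "(\<integral>x. max (t - X x) 0 - max (s - X x) 0 \<partial>M) = 0"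
    using lower_pm_mono[of s t] assms(1) integrable_lower_pm_integrand
    unfolding lower_pm_def by simp
  then have "AE x in M. max (t - X x) 0 - max (s - X x) 0 = 0"
    using integral_nonneg_eq_0_iff_AE[of M "\<lambda>x. max (t - X x) 0 - max (s - X x) 0"]
      integrable_lower_pm_integrand assms(1) by auto
  then have "AE x in M. t \<le> X x"
    by (rule eventually_mono) (use assms(1) in \<open>auto simp: max_def split: if_splits\<close>)
  then have "expectation (\<lambda>_. t) \<le> expectation X"
    using integrable_X by (intro integral_mono_AE) auto
  then show False
    using assms(2) by (simp add: prob_space)
qed

lemma expectile_ident_diff_bounds:
  assumes "0 < \<tau>" "\<tau> < 1" "s \<le> t"
  shows "min \<tau> (1 - \<tau>) * (t - s) \<le> expectile_ident \<tau> s - expectile_ident \<tau> t"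
    and "expectile_ident \<tau> s - expectile_ident \<tau> t \<le> t - s"
proof -
  define dF where "dF = upper_pm s - upper_pm t"
  define dG where "dG = lower_pm t - lower_pm s"
  have nonneg: "0 \<le> dF" "0 \<le> dG"
    using upper_pm_antimono lower_pm_mono assms(3) unfolding dF_def dG_def by auto
  have sum: "dF + dG = t - s"
    using upper_pm_minus_lower_pm[of s] upper_pm_minus_lower_pm[of t]
    unfolding dF_def dG_def by linarith
  have diff: "expectile_ident \<tau> s - expectile_ident \<tau> t = \<tau> * dF + (1 - \<tau>) * dG"
    unfolding expectile_ident_def dF_def dG_def by (simp add: algebra_simps)
  have "min \<tau> (1 - \<tau>) * dF \<le> \<tau> * dF" "min \<tau> (1 - \<tau>) * dG \<le> (1 - \<tau>) * dG"
    using nonneg by (auto intro: mult_right_mono)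
  then show "min \<tau> (1 - \<tau>) * (t - s) \<le> expectile_ident \<tau> s - expectile_ident \<tau> t"
    unfolding diff sum[symmetric] by (simp add: distrib_left)
  have "\<tau> * dF \<le> dF" "(1 - \<tau>) * dG \<le> dG"
    using nonneg assms by (auto intro: mult_left_le_one_le)
  then show "expectile_ident \<tau> s - expectile_ident \<tau> t \<le> t - s"
    unfolding diff sum[symmetric] by linarith
qed

lemma expectile_ident_strict_antimono:
  assumes "0 < \<tau>" "\<tau> < 1" "s < t"
  shows "expectile_ident \<tau> t < expectile_ident \<tau> s"
proof -
  have "0 < min \<tau> (1 - \<tau>) * (t - s)"
    using assms by simp
  then show ?thesis
    using expectile_ident_diff_bounds(1)[of \<tau> s t] assms by linarith
qed

lemma continuous_on_expectile_ident:
  assumes "0 < \<tau>" "\<tau> < 1"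
  shows "continuous_on S (expectile_ident \<tau>)"
proof (rule lipschitz_on_continuous_on[of 1], rule lipschitz_onI)
  have ordered: "\<bar>expectile_ident \<tau> s - expectile_ident \<tau> t\<bar> \<le> t - s" if "s \<le> t" for s t
  proof -
    have "0 \<le> min \<tau> (1 - \<tau>) * (t - s)"
      using assms that by simp
    then show ?thesis
      using expectile_ident_diff_bounds[OF assms that] by linarith
  qed
  fix s t
  show "dist (expectile_ident \<tau> s) (expectile_ident \<tau> t) \<le> 1 * dist s t"
    using ordered[of s t] ordered[of t s] by (cases "s \<le> t") (auto simp: dist_real_def abs_minus_commute)
qed auto

lemma expectile_ident_has_root:
  assumes "0 < \<tau>" "\<tau> < 1"
  shows "\<exists>e. expectile_ident \<tau> e = 0"
proof -
  define c where "c = min \<tau> (1 - \<tau>)"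
  have "0 < c"
    using assms unfolding c_def by auto
  define K where "K = \<bar>expectile_ident \<tau> 0\<bar> / c"
  have K: "0 \<le> K" "c * K = \<bar>expectile_ident \<tau> 0\<bar>"
    using \<open>0 < c\<close> unfolding K_def by auto
  have "expectile_ident \<tau> K \<le> 0" "0 \<le> expectile_ident \<tau> (-K)"
    using expectile_ident_diff_bounds(1)[OF assms, of 0 K]
      expectile_ident_diff_bounds(1)[OF assms, of "-K" 0] K
    unfolding c_def by auto
  then show ?thesis
    using IVT2'[of "expectile_ident \<tau>" K 0 "-K"] K continuous_on_expectile_ident[OF assms]
    by auto
qed

lemma expectile_ident_expectile:
  assumes "0 < \<tau>" "\<tau> < 1"
  shows "expectile_ident \<tau> (expectile M X \<tau>) = 0"
proof -
  obtain e where e: "expectile_ident \<tau> e = 0"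
    using expectile_ident_has_root[OF assms] by blast
  have "expectile M X \<tau> = e"
    unfolding expectile_def
  proof (rule the_equality)
    fix t
    assume "\<tau> * (\<integral>x. max (X x - t) 0 \<partial>M) = (1 - \<tau>) * (\<integral>x. max (t - X x) 0 \<partial>M)"
    then have "expectile_ident \<tau> t = expectile_ident \<tau> e"
      using e unfolding expectile_ident_def upper_pm_def lower_pm_def by simp
    then show "t = e"
      using expectile_ident_strict_antimono[OF assms, of t e]
        expectile_ident_strict_antimono[OF assms, of e t]
      by (cases t e rule: linorder_cases) auto
  qed (use e in \<open>simp add: expectile_ident_def upper_pm_def lower_pm_def\<close>)
  then show ?thesis
    using e by simp
qed

lemma lower_pm_mean_pos:
  assumes "\<not> (\<exists>c. AE x in M. X x = c)"
  shows "0 < lower_pm (expectation X)"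
proof (rule ccontr)
  let ?\<mu> = "expectation X"
  assume "\<not> 0 < lower_pm ?\<mu>"
  with lower_pm_nonneg[of ?\<mu>] have "(\<integral>x. max (?\<mu> - X x) 0 \<partial>M) = 0"
    unfolding lower_pm_def by linarith
  then have "AE x in M. max (?\<mu> - X x) 0 = 0"
    using integral_nonneg_eq_0_iff_AE[OF integrable_lower_pm_integrand] by auto
  then have ge: "AE x in M. 0 \<le> X x - ?\<mu>"
    by (rule eventually_mono) (auto simp: max_def split: if_splits)
  have "(\<integral>x. X x - ?\<mu> \<partial>M) = 0"
    using integrable_X by (simp add: prob_space)
  then have "AE x in M. X x - ?\<mu> = 0"
    using integral_nonneg_eq_0_iff_AE[of M "\<lambda>x. X x - ?\<mu>"] integrable_X ge by auto
  then have "AE x in M. X x = ?\<mu>"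
    by (rule eventually_mono) simp
  then show False
    using assms by blast
qed

lemma expectile_ident_mean:
  "expectile_ident \<tau> (expectation X) = (2 * \<tau> - 1) * lower_pm (expectation X)"
  using upper_pm_minus_lower_pm[of "expectation X"]
  unfolding expectile_ident_def by (simp add: algebra_simps)

lemma expectile_less_mean:
  assumes "\<not> (\<exists>c. AE x in M. X x = c)" and "0 < \<tau>" "\<tau> < 1/2"
  shows "expectile M X \<tau> < expectation X"
proof (rule ccontr)
  assume "\<not> expectile M X \<tau> < expectation X"
  moreover have "expectile_ident \<tau> (expectation X) < 0"
    unfolding expectile_ident_mean
    using lower_pm_mean_pos[OF assms(1)] assms(3) by (simp add: mult_neg_pos)
  ultimately show False
    using expectile_ident_strict_antimono[of \<tau> "expectation X" "expectile M X \<tau>"]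
      expectile_ident_expectile[of \<tau>] assms(2,3)
    by (cases "expectile M X \<tau> = expectation X") auto
qed

lemma mean_less_expectile:
  assumes "\<not> (\<exists>c. AE x in M. X x = c)" and "1/2 < \<tau>" "\<tau> < 1"
  shows "expectation X < expectile M X \<tau>"
proof (rule ccontr)
  assume "\<not> expectation X < expectile M X \<tau>"
  moreover have "0 < expectile_ident \<tau> (expectation X)"
    unfolding expectile_ident_mean
    using lower_pm_mean_pos[OF assms(1)] assms(2) by simp
  ultimately show False
    using expectile_ident_strict_antimono[of \<tau> "expectile M X \<tau>" "expectation X"]
      expectile_ident_expectile[of \<tau>] assms(2,3)
    by (cases "expectile M X \<tau> = expectation X") auto
qed

lemma expectile_ge:
  assumes "AE x in M. lo \<le> X x" and "0 < \<tau>" "\<tau> < 1"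
  shows "lo \<le> expectile M X \<tau>"
proof (rule ccontr)
  assume "\<not> lo \<le> expectile M X \<tau>"
  have "lower_pm lo = (\<integral>x. 0 \<partial>M)"
    unfolding lower_pm_def
    by (rule integral_cong_AE)
      (use assms(1) borel_measurable_integrable[OF integrable_lower_pm_integrand] in
        \<open>auto elim!: eventually_mono\<close>)
  then have "0 \<le> expectile_ident \<tau> lo"
    unfolding expectile_ident_def using upper_pm_nonneg assms(2) by simp
  then show False
    using expectile_ident_strict_antimono[of \<tau> "expectile M X \<tau>" lo]
      expectile_ident_expectile[of \<tau>] assms(2,3) \<open>\<not> lo \<le> expectile M X \<tau>\<close> by simp
qed

lemma expectile_le:
  assumes "AE x in M. X x \<le> hi" and "0 < \<tau>" "\<tau> < 1"
  shows "expectile M X \<tau> \<le> hi"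
proof (rule ccontr)
  assume "\<not> expectile M X \<tau> \<le> hi"
  have "upper_pm hi = (\<integral>x. 0 \<partial>M)"
    unfolding upper_pm_def
    by (rule integral_cong_AE)
      (use assms(1) borel_measurable_integrable[OF integrable_upper_pm_integrand] in
        \<open>auto elim!: eventually_mono\<close>)
  then have "expectile_ident \<tau> hi \<le> 0"
    unfolding expectile_ident_def using lower_pm_nonneg[of hi] assms(3) by simp
  then show False
    using expectile_ident_strict_antimono[of \<tau> hi "expectile M X \<tau>"]
      expectile_ident_expectile[of \<tau>] assms(2,3) \<open>\<not> expectile M X \<tau> \<le> hi\<close> by simp
qed

lemma expectile_skewness_upper_pm:
  fixes \<alpha> :: real
  defines "a \<equiv> expectile M X \<alpha>" and "b \<equiv> expectile M X (1 - \<alpha>)"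
  assumes "0 < \<alpha>" "\<alpha> < 1" and "a \<noteq> b"
  shows "expectile_skewness M X \<alpha> = (1 - 2*\<alpha>) * (1 - 2 * ((upper_pm a - upper_pm b) / (b - a)))"
proof -
  let ?\<mu> = "expectation X"
  have "\<alpha> * upper_pm a = (1 - \<alpha>) * lower_pm a" "(1 - \<alpha>) * upper_pm b = \<alpha> * lower_pm b"
    using expectile_ident_expectile[of \<alpha>] expectile_ident_expectile[of "1 - \<alpha>"] assms(3,4)
    unfolding a_def b_def expectile_ident_def by auto
  moreover have "lower_pm a = upper_pm a - (?\<mu> - a)" "lower_pm b = upper_pm b - (?\<mu> - b)"
    using upper_pm_minus_lower_pm[of a] upper_pm_minus_lower_pm[of b] by simp_all
  ultimately have "(1 - \<alpha>) * (?\<mu> - a) = (1 - 2*\<alpha>) * upper_pm a"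
    and "\<alpha> * (b - ?\<mu>) = (1 - 2*\<alpha>) * upper_pm b"
    by (simp_all add: algebra_simps)
  then have "a + b - 2 * ?\<mu> = (1 - 2*\<alpha>) * ((b - a) - 2 * (upper_pm a - upper_pm b))"
    by (simp add: algebra_simps)
  then show ?thesis
    using assms(5) unfolding expectile_skewness_def a_def b_def
    by (simp add: field_simps)
qed

lemma expectile_skewness_bounds:
  assumes "\<not> (\<exists>c. AE x in M. X x = c)" and "0 < \<alpha>" "\<alpha> < 1/2"
  shows "-1 + 2*\<alpha> < expectile_skewness M X \<alpha> \<and> expectile_skewness M X \<alpha> < 1 - 2*\<alpha>"
proof -
  define a where "a = expectile M X \<alpha>"
  define b where "b = expectile M X (1 - \<alpha>)"
  define q where "q = (upper_pm a - upper_pm b) / (b - a)"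
  have "a < expectation X" "expectation X < b"
    using expectile_less_mean[OF assms] mean_less_expectile[OF assms(1), of "1 - \<alpha>"] assms(2,3)
    unfolding a_def b_def by auto
  then have "upper_pm b < upper_pm a" "lower_pm a < lower_pm b"
    using upper_pm_strict_antimono lower_pm_strict_mono by auto
  moreover have "upper_pm a - upper_pm b + (lower_pm b - lower_pm a) = b - a"
    using upper_pm_minus_lower_pm[of a] upper_pm_minus_lower_pm[of b] by simp
  ultimately have "0 < q" "q < 1"
    using \<open>a < expectation X\<close> \<open>expectation X < b\<close> unfolding q_def by (auto simp: divide_less_eq)
  then have "0 < (1 - 2*\<alpha>) * q" "(1 - 2*\<alpha>) * q < 1 - 2*\<alpha>"
    using assms(3) by simp_all
  moreover have "expectile_skewness M X \<alpha> = (1 - 2*\<alpha>) * (1 - 2 * q)"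
    using expectile_skewness_upper_pm assms(2,3) \<open>a < expectation X\<close> \<open>expectation X < b\<close>
    unfolding a_def b_def q_def by fastforce
  ultimately show ?thesis
    by (simp add: algebra_simps)
qed

end

lemma finite_mean_rv_if_nondeg_rv: "nondeg_rv M X \<Longrightarrow> finite_mean_rv M X"
  unfolding nondeg_rv_def finite_mean_rv_def finite_mean_rv_axioms_def by auto

lemma nondeg_rv_expectile_skewness_bounds:
  assumes "nondeg_rv M X" and "0 < \<alpha>" "\<alpha> < 1/2"
  shows "-1 + 2*\<alpha> < expectile_skewness M X \<alpha> \<and> expectile_skewness M X \<alpha> < 1 - 2*\<alpha>"
proof -
  interpret finite_mean_rv M X
    using finite_mean_rv_if_nondeg_rv[OF assms(1)] .
  show ?thesis
    by (rule expectile_skewness_bounds) (use assms in \<open>simp_all add: nondeg_rv_def\<close>)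
qed

definition bernoulli_measure :: "real \<Rightarrow> real measure" where
  "bernoulli_measure p = measure_pmf (map_pmf (\<lambda>b. if b then 1 else 0) (bernoulli_pmf p))"

lemma integral_bernoulli_measure:
  assumes "0 \<le> p" "p \<le> 1"
  shows "(\<integral>x. f x \<partial>bernoulli_measure p) = f 1 * p + f 0 * (1 - p)"
  unfolding bernoulli_measure_def using assms by simp

lemma AE_bernoulli_measure:
  assumes "0 < p" "p < 1"
  shows "(AE x in bernoulli_measure p. P x) \<longleftrightarrow> P 0 \<and> P 1"
proof -
  have "set_pmf (map_pmf (\<lambda>b. if b then 1 else 0 :: real) (bernoulli_pmf p)) = {0, 1}"
    using assms by (auto simp: UNIV_bool)
  then show ?thesis
    unfolding bernoulli_measure_def AE_measure_pmf_iff by auto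
qed

lemma nondeg_rv_bernoulli:
  assumes "0 < p" "p < 1"
  shows "nondeg_rv (bernoulli_measure p) (\<lambda>x. x)"
proof -
  have "\<not> (\<exists>c. AE x in bernoulli_measure p. x = c)"
    unfolding AE_bernoulli_measure[OF assms] by auto
  then show ?thesis
    unfolding nondeg_rv_def
    by (auto simp: bernoulli_measure_def prob_space_measure_pmf intro: integrable_measure_pmf_finite)
qed

lemma expectile_skewness_bernoulli:
  assumes "0 < p" "p < 1" "0 < \<alpha>" "\<alpha> < 1/2"
  shows "expectile_skewness (bernoulli_measure p) (\<lambda>x. x) \<alpha> = (1 - 2*\<alpha>) * (1 - 2*p)"
proof -
  let ?M = "bernoulli_measure p"
  interpret finite_mean_rv ?M "\<lambda>x. x"
    by (rule finite_mean_rv_if_nondeg_rv[OF nondeg_rv_bernoulli[OF assms(1,2)]])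
  have nondeg: "\<not> (\<exists>c. AE x in ?M. x = c)"
    using nondeg_rv_bernoulli[OF assms(1,2)] unfolding nondeg_rv_def by simp
  define a where "a = expectile ?M (\<lambda>x. x) \<alpha>"
  define b where "b = expectile ?M (\<lambda>x. x) (1 - \<alpha>)"
  have "a < b"
    using expectile_less_mean[OF nondeg] mean_less_expectile[OF nondeg, of "1 - \<alpha>"] assms(3,4)
    unfolding a_def b_def by fastforce
  have range: "0 \<le> a" "b \<le> 1"
    using expectile_ge[of 0 \<alpha>] expectile_le[of 1 "1 - \<alpha>"] assms
    unfolding a_def b_def AE_bernoulli_measure[OF assms(1,2)] by auto
  have "upper_pm t = (1 - t) * p" if "0 \<le> t" "t \<le> 1" for t
    unfolding upper_pm_def using that assms(1,2) by (simp add: integral_bernoulli_measure)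
  then have "upper_pm a - upper_pm b = (b - a) * p"
    using range \<open>a < b\<close> by (simp add: algebra_simps)
  then show ?thesis
    using expectile_skewness_upper_pm[of \<alpha>] assms(3,4) \<open>a < b\<close>
    unfolding a_def b_def by simp
qed

lemma expectile_skewness_range:
  assumes "0 < \<alpha>" "\<alpha> < 1/2"
  shows "(\<lambda>MX. expectile_skewness (fst MX) (snd MX) \<alpha>) `
           {(M :: real measure, X :: real \<Rightarrow> real). nondeg_rv M X}
         = {-1 + 2*\<alpha> <..< 1 - 2*\<alpha>}" (is "?S = _")
proof
  show "?S \<subseteq> {-1 + 2*\<alpha> <..< 1 - 2*\<alpha>}"
    by (auto dest: nondeg_rv_expectile_skewness_bounds[OF _ assms])
next
  show "{-1 + 2*\<alpha> <..< 1 - 2*\<alpha>} \<subseteq> ?S"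
  proof
    fix s
    assume s: "s \<in> {-1 + 2*\<alpha> <..< 1 - 2*\<alpha>}"
    define p where "p = (1 - s / (1 - 2*\<alpha>)) / 2"
    have p: "0 < p" "p < 1"
      using s assms unfolding p_def by (auto simp: field_simps)
    have "s = (1 - 2*\<alpha>) * (1 - 2*p)"
      unfolding p_def using assms by (simp add: field_simps)
    also have "\<dots> = expectile_skewness (bernoulli_measure p) (\<lambda>x. x) \<alpha>"
      using expectile_skewness_bernoulli[OF p assms] ..
    finally show "s \<in> ?S"
      using nondeg_rv_bernoulli[OF p]
      by (intro image_eqI[where x = "(bernoulli_measure p, \<lambda>x. x)"]) auto
  qed
qed

theorem mainTheorem2:
  fixes \<alpha> :: real
  assumes "0 < \<alpha>" and "\<alpha> < 1/2"
  shows "(\<forall>(M :: 'a measure) X. nondeg_rv M X \<longrightarrow>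
            -1 + 2*\<alpha> < expectile_skewness M X \<alpha> \<and> expectile_skewness M X \<alpha> < 1 - 2*\<alpha>)
       \<and> (SUP MX \<in> {(M :: real measure, X :: real \<Rightarrow> real). nondeg_rv M X}.
            expectile_skewness (fst MX) (snd MX) \<alpha>) = 1 - 2*\<alpha>
       \<and> (INF MX \<in> {(M :: real measure, X :: real \<Rightarrow> real). nondeg_rv M X}.
            expectile_skewness (fst MX) (snd MX) \<alpha>) = -1 + 2*\<alpha>"
proof (intro conjI allI impI)
  fix M :: "'a measure" and X
  assume "nondeg_rv M X"
  then show "-1 + 2*\<alpha> < expectile_skewness M X \<alpha>" "expectile_skewness M X \<alpha> < 1 - 2*\<alpha>"
    using nondeg_rv_expectile_skewness_bounds[OF _ assms] by blast+
next
  have "-1 + 2*\<alpha> < 1 - 2*\<alpha>"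
    using assms by simp
  then show "(SUP MX \<in> {(M :: real measure, X :: real \<Rightarrow> real). nondeg_rv M X}.
               expectile_skewness (fst MX) (snd MX) \<alpha>) = 1 - 2*\<alpha>"
    and "(INF MX \<in> {(M :: real measure, X :: real \<Rightarrow> real). nondeg_rv M X}.
               expectile_skewness (fst MX) (snd MX) \<alpha>) = -1 + 2*\<alpha>"
    by (simp_all add: expectile_skewness_range[OF assms])
qed

end
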